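(* Fix $d\in\mathbb N$ and $1\le k\le d-1$. Let $S_\star$ be drawn uniformly from the $k$-element subsets of $[d]$. Given $S_\star$, draw $m$ i.i.d. samples $(x^{(i)},z^{(i)})$, $i=1,\dots,m$, where $x^{(i)}$ is uniform on $\{0,1\}^d$, $\pi^{(i)}$ is a uniformly random bijection $[k]\to S_\star$ (independent across $i$), and $z^{(i)}=(z^{(i)}_1,\dots,z^{(i)}_k)$ with $z^{(i)}_t=\bigoplus_{s=1}^t x^{(i)}_{\pi^{(i)}(s)}$. Then for any (possibly randomized) estimator $\hat S$ of $S_\star$ from the samples, achieving $\Pr[\hat S=S_\star]\ge1-\delta$ (probability over $S_\star$, the samples and the estimator) requires $$m\ge\frac{(1-\delta)\log\binom dk-1}{\log(k+1)}.$$ Moreover, for $k\le d/2$, this gives $m\ge\frac{(1-\delta)k\log(d/k)-1}{\log(k+1)}$. *)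

theory Defs
  imports "HOL-Probability.Probability_Mass_Function"
begin

type_synonym sample = "(nat \<Rightarrow> bool) \<times> bool list"

definition xor_list :: "bool list \<Rightarrow> bool" where
  "xor_list bs = foldr (\<lambda>a b. a \<noteq> b) bs False"

definition cube_pmf :: "nat \<Rightarrow> (nat \<Rightarrow> bool) pmf" where
  "cube_pmf d = pmf_of_set ({1..d} \<rightarrow>\<^sub>E (UNIV :: bool set))"

definition bij_pmf :: "nat \<Rightarrow> nat set \<Rightarrow> (nat \<Rightarrow> nat) pmf" where
  "bij_pmf k S = pmf_of_set {\<pi> \<in> {1..k} \<rightarrow>\<^sub>E S. bij_betw \<pi> {1..k} S}"

definition prefix_xor :: "nat \<Rightarrow> (nat \<Rightarrow> bool) \<Rightarrow> (nat \<Rightarrow> nat) \<Rightarrow> bool list" where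
  "prefix_xor k x \<pi> = map (\<lambda>t. xor_list (map (\<lambda>s. x (\<pi> s)) [1..<t+1])) [1..<k+1]"

definition sample_pmf :: "nat \<Rightarrow> nat \<Rightarrow> nat set \<Rightarrow> sample pmf" where
  "sample_pmf d k S = do {
     x \<leftarrow> cube_pmf d;
     \<pi> \<leftarrow> bij_pmf k S;
     return_pmf (x, prefix_xor k x \<pi>)
   }"

definition subset_pmf :: "nat \<Rightarrow> nat \<Rightarrow> nat set pmf" where
  "subset_pmf d k = pmf_of_set {S. S \<subseteq> {1..d} \<and> card S = k}"

definition success_pmf :: "nat \<Rightarrow> nat \<Rightarrow> nat \<Rightarrow> (sample list \<Rightarrow> nat set pmf) \<Rightarrow> bool pmf" where
  "success_pmf d k m est = do {
     S \<leftarrow> subset_pmf d k;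
     smp \<leftarrow> replicate_pmf m (sample_pmf d k S);
     Sh \<leftarrow> est smp;
     return_pmf (Sh = S)
   }"

end

theory Submission
  imports Defs "HOL-Combinatorics.Multiset_Permutations"
begin

(*
  Given x, the word read off x along a uniformly random enumeration of the hidden k-set S is
  uniformly distributed over the rearrangements of its multiset of bits, and a sample reveals only
  the prefix parities z of that word. Hence the likelihood of (x, z) under S is at most 2^-d times
  the sum, over words w with prefix parities z, of 1 / #rearrangements(w): a dominating function
  independent of S whose total mass is the number of multisets of k bits, namely k + 1. Under the
  uniform prior on the C(d,k) candidate sets, any estimator that sees m samples therefore succeeds
  with probability at most (k + 1)^m / C(d,k), and taking logarithms gives the bound.
*)

section \<open>Estimation under a common dominating function\<close>

lemma pmf_replicate_pmf:
  "pmf (replicate_pmf n p) xs = (if length xs = n then prod_list (map (pmf p) xs) else 0)"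
proof (induction n arbitrary: xs)
  case 0
  show ?case by (cases xs) auto
next
  case (Suc n)
  have rep: "replicate_pmf (Suc n) p = map_pmf (\<lambda>(x, xs). x # xs) (pair_pmf p (replicate_pmf n p))"
    by (simp add: pair_pmf_def map_pmf_def bind_assoc_pmf bind_return_pmf)
  show ?case
  proof (cases xs)
    case Nil
    then show ?thesis by (simp add: pmf_eq_0_set_pmf set_replicate_pmf del: replicate_pmf.simps)
  next
    case (Cons y ys)
    have "inj (\<lambda>(x, xs). x # xs)" by (auto simp: inj_def)
    then have "pmf (replicate_pmf (Suc n) p) (y # ys) = pmf (pair_pmf p (replicate_pmf n p)) (y, ys)"
      unfolding rep by (metis (no_types) case_prod_conv pmf_map_inj')
    then show ?thesis using Cons Suc.IH by (simp add: pmf_pair)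
  qed
qed

lemma sum_prod_list_lists_length:
  fixes b :: "'a \<Rightarrow> 'b::comm_semiring_1"
  assumes "finite A"
  shows "(\<Sum>xs\<in>{xs \<in> lists A. length xs = n}. prod_list (map b xs)) = (\<Sum>a\<in>A. b a) ^ n"
proof (induction n)
  case 0
  have "{xs \<in> lists A. length xs = 0} = {[]}" by auto
  then show ?case by simp
next
  case (Suc n)
  let ?L = "{xs \<in> lists A. length xs = n}"
  have Suc_eq: "{xs \<in> lists A. length xs = Suc n} = (\<lambda>(x, xs). x # xs) ` (A \<times> ?L)"
    by (auto simp: length_Suc_conv image_def)
  have "inj_on (\<lambda>(x, xs). x # xs) (A \<times> ?L)"
    by (auto simp: inj_on_def)
  then have "(\<Sum>xs\<in>{xs \<in> lists A. length xs = Suc n}. prod_list (map b xs))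
      = (\<Sum>(x, xs)\<in>A \<times> ?L. b x * prod_list (map b xs))"
    unfolding Suc_eq by (simp add: sum.reindex case_prod_unfold)
  also have "\<dots> = (\<Sum>x\<in>A. \<Sum>xs\<in>?L. b x * prod_list (map b xs))"
    by (simp add: sum.cartesian_product)
  also have "\<dots> = (\<Sum>a\<in>A. b a) * (\<Sum>xs\<in>?L. prod_list (map b xs))"
    by (rule sum_product[symmetric])
  finally show ?case using Suc.IH by simp
qed

lemma prod_list_map_mono:
  fixes f g :: "'a \<Rightarrow> 'b::linordered_semidom"
  assumes "\<And>x. x \<in> set xs \<Longrightarrow> 0 \<le> f x" and "\<And>x. x \<in> set xs \<Longrightarrow> f x \<le> g x"
  shows "prod_list (map f xs) \<le> prod_list (map g xs)"
  using assms
proof (induction xs)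
  case (Cons a xs)
  have "0 \<le> prod_list (map f xs)" using Cons.prems(1) by (intro prod_list_nonneg) auto
  moreover have "0 \<le> g a" using Cons.prems order_trans by fastforce
  ultimately show ?case using Cons by (auto intro: mult_mono)
qed simp

lemma success_prob_le_dominating_mass:
  fixes P :: "'h \<Rightarrow> 's pmf" and est :: "'s list \<Rightarrow> 'h pmf" and b :: "'s \<Rightarrow> real"
  assumes "finite H" and "H \<noteq> {}" and "finite T"
    and support: "\<And>h. h \<in> H \<Longrightarrow> set_pmf (P h) \<subseteq> T"
    and dominated: "\<And>h s. h \<in> H \<Longrightarrow> pmf (P h) s \<le> b s"
    and mass: "(\<Sum>s\<in>T. b s) \<le> B"
  shows "measure_pmf.prob (do {
           h \<leftarrow> pmf_of_set H;
           xs \<leftarrow> replicate_pmf m (P h);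
           h' \<leftarrow> est xs;
           return_pmf (h' = h)
         }) {True} \<le> B ^ m / card H"
    (is "measure_pmf.prob ?success {True} \<le> _")
proof -
  have b_nonneg: "0 \<le> b s" for s
  proof -
    obtain h where "h \<in> H" using assms(2) by blast
    then show ?thesis using dominated[of h s] pmf_nonneg[of "P h" s] by linarith
  qed
  define D where "D = {xs \<in> lists T. length xs = m}"
  define L where "L xs = prod_list (map b xs)" for xs
  define I where "I h = (\<integral>xs. pmf (est xs) h \<partial>replicate_pmf m (P h))" for h
  have "finite D"
    using finite_lists_length_eq[OF \<open>finite T\<close>, of m] by (simp add: D_def lists_eq_set)
  have "pmf (est xs \<bind> (\<lambda>h'. return_pmf (h' = h))) True = pmf (est xs) h" for xs h
  proof -
    have "(\<lambda>h'. h' = h) -` {True} = {h}" by auto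
    then show ?thesis by (simp add: map_pmf_def[symmetric] pmf_map measure_pmf_single)
  qed
  then have "measure_pmf.prob ?success {True} = (\<Sum>h\<in>H. I h) / card H"
    using assms(1,2) by (simp add: measure_pmf_single pmf_bind I_def integral_pmf_of_set)
  also have "(\<Sum>h\<in>H. I h) \<le> (\<Sum>h\<in>H. \<Sum>xs\<in>D. pmf (est xs) h * L xs)"
  proof (rule sum_mono)
    fix h assume "h \<in> H"
    have "I h = (\<Sum>xs\<in>D. pmf (est xs) h * pmf (replicate_pmf m (P h)) xs)"
      unfolding I_def
      using \<open>finite D\<close> support[OF \<open>h \<in> H\<close>]
      by (intro integral_measure_pmf_real) (auto simp: D_def set_replicate_pmf)
    also have "\<dots> \<le> (\<Sum>xs\<in>D. pmf (est xs) h * L xs)"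
    proof (intro sum_mono mult_left_mono)
      fix xs assume "xs \<in> D"
      then have "pmf (replicate_pmf m (P h)) xs = prod_list (map (pmf (P h)) xs)"
        by (simp add: D_def pmf_replicate_pmf)
      also have "\<dots> \<le> L xs"
        unfolding L_def using dominated[OF \<open>h \<in> H\<close>] by (intro prod_list_map_mono) auto
      finally show "pmf (replicate_pmf m (P h)) xs \<le> L xs" .
    qed simp
    finally show "I h \<le> (\<Sum>xs\<in>D. pmf (est xs) h * L xs)" .
  qed
  also have "\<dots> = (\<Sum>xs\<in>D. \<Sum>h\<in>H. pmf (est xs) h * L xs)"
    by (rule sum.swap)
  also have "\<dots> = (\<Sum>xs\<in>D. L xs * measure_pmf.prob (est xs) H)"
    using \<open>finite H\<close> by (simp add: sum_distrib_left measure_measure_pmf_finite mult.commute)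
  also have "\<dots> \<le> (\<Sum>xs\<in>D. L xs)"
  proof (intro sum_mono mult_left_le)
    fix xs
    show "0 \<le> L xs" unfolding L_def using b_nonneg by (intro prod_list_nonneg) auto
  qed simp
  also have "\<dots> = (\<Sum>s\<in>T. b s) ^ m"
    unfolding D_def L_def by (rule sum_prod_list_lists_length[OF \<open>finite T\<close>])
  also have "\<dots> \<le> B ^ m"
    using b_nonneg mass by (intro power_mono sum_nonneg) auto
  finally show ?thesis by (simp add: divide_right_mono)
qed

section \<open>Prefix-parity samples\<close>

lemma pmf_le_inverse_card:
  assumes "finite A" and "a \<in> A" and "\<And>a'. a' \<in> A \<Longrightarrow> pmf M a \<le> pmf M a'"
  shows "pmf M a \<le> 1 / card A"
proof -
  have "card A * pmf M a \<le> (\<Sum>a'\<in>A. pmf M a')"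
    using sum_bounded_below[of A "pmf M a" "pmf M"] assms(3) by simp
  also have "\<dots> = measure_pmf.prob M A"
    using assms(1) by (simp add: measure_measure_pmf_finite)
  also have "\<dots> \<le> 1" by simp
  finally have "card A * pmf M a \<le> 1" .
  moreover have "card A > 0" using assms(1,2) card_gt_0_iff by blast
  ultimately show ?thesis by (simp add: le_divide_eq mult.commute)
qed

lemma sum_inverse_card_fibres:
  assumes "finite A"
  shows "(\<Sum>a\<in>A. 1 / real (card {a' \<in> A. f a' = f a})) = card (f ` A)"
proof -
  have "(\<Sum>a\<in>A. 1 / real (card {a' \<in> A. f a' = f a}))
      = (\<Sum>y\<in>f ` A. \<Sum>a\<in>{a \<in> A. f a = y}. 1 / real (card {a' \<in> A. f a' = f a}))"
    by (rule sum.image_gen[OF assms, of _ f])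
  also have "\<dots> = (\<Sum>y\<in>f ` A. 1)"
  proof (rule sum.cong[OF refl])
    fix y assume "y \<in> f ` A"
    then have "{a \<in> A. f a = y} \<noteq> {}" by auto
    moreover have "finite {a \<in> A. f a = y}" using assms by simp
    ultimately show "(\<Sum>a\<in>{a \<in> A. f a = y}. 1 / real (card {a' \<in> A. f a' = f a})) = 1"
      by simp
  qed
  finally show ?thesis by simp
qed

lemma finite_lists_length_eq_UNIV: "finite {xs :: 'a::finite list. length xs = n}"
  using finite_lists_length_eq[of "UNIV :: 'a set" n] by simp

lemma card_mset_bool_lists_le: "card (mset ` {w :: bool list. length w = k}) \<le> k + 1"
proof -
  have size_bool: "size M = count M True + count M False" for M :: "bool multiset"
    by (induction M) auto
  have "inj_on (\<lambda>M. count M True) (mset ` {w :: bool list. length w = k})"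
  proof (rule inj_onI, rule multiset_eqI)
    fix M M' b
    assume "M \<in> mset ` {w. length w = k}" "M' \<in> mset ` {w. length w = k}"
      and True_eq: "count M True = count M' True"
    then have "count M False = count M' False"
      using size_bool[of M] size_bool[of M'] by auto
    with True_eq show "count M b = count M' b" by (cases b) auto
  qed
  moreover have "count (mset w) True \<le> k" if "length w = k" for w :: "bool list"
    using count_le_size[of "mset w" True] that by simp
  then have "(\<lambda>M. count M True) ` mset ` {w :: bool list. length w = k} \<subseteq> {0..k}"
    by auto
  ultimately have "card (mset ` {w :: bool list. length w = k}) \<le> card {0..k}"
    by (intro card_inj_on_le) auto
  then show ?thesis by simp
qed

definition enumerations :: "nat \<Rightarrow> 'a set \<Rightarrow> (nat \<Rightarrow> 'a) set" where
  "enumerations k S = {\<pi> \<in> {1..k} \<rightarrow>\<^sub>E S. bij_betw \<pi> {1..k} S}"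

definition word_along :: "nat \<Rightarrow> ('a \<Rightarrow> 'b) \<Rightarrow> (nat \<Rightarrow> 'a) \<Rightarrow> 'b list" where
  "word_along k x \<pi> = map (x \<circ> \<pi>) [1..<k+1]"

definition prefix_parities :: "bool list \<Rightarrow> bool list" where
  "prefix_parities w = map (\<lambda>t. xor_list (take t w)) [1..<length w + 1]"

lemma bij_pmf_eq_enumerations: "bij_pmf k S = pmf_of_set (enumerations k S)"
  by (simp add: bij_pmf_def enumerations_def)

lemma finite_enumerations: "finite S \<Longrightarrow> finite (enumerations k S)"
  by (rule finite_subset[of _ "{1..k} \<rightarrow>\<^sub>E S"]) (auto simp: enumerations_def finite_PiE)

lemma enumerations_nonempty:
  assumes "finite S" and "card S = k"
  shows "enumerations k S \<noteq> {}"
proof -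
  obtain h where h: "bij_betw h {1..k} S"
    using assms finite_same_card_bij[of "{1..k}" S] by auto
  then have "restrict h {1..k} \<in> enumerations k S"
    unfolding enumerations_def
    by (auto simp: bij_betw_cong[of "{1..k}" "restrict h {1..k}" h] dest: bij_betwE)
  then show ?thesis by blast
qed

lemma length_word_along [simp]: "length (word_along k x \<pi>) = k"
  by (simp add: word_along_def)

lemma nth_word_along: "i < k \<Longrightarrow> word_along k x \<pi> ! i = x (\<pi> (Suc i))"
  by (simp add: word_along_def nth_map_upt del: upt_Suc)

lemma prefix_xor_eq_prefix_parities: "prefix_xor k x \<pi> = prefix_parities (word_along k x \<pi>)"
  unfolding prefix_xor_def prefix_parities_def word_along_def
  by (auto simp: take_map min_def comp_def intro!: map_cong)

lemma bij_betw_shifted_permutation: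
  assumes "p permutes {..<k}"
  shows "bij_betw (\<lambda>s. Suc (p (s - 1))) {1..k} {1..k}"
proof -
  have "bij_betw (\<lambda>s. s - 1) {1..k} {..<k}"
    by (rule bij_betw_byWitness[where f' = Suc]) auto
  moreover have "bij_betw p {..<k} {..<k}"
    using assms by (rule permutes_imp_bij)
  moreover have "bij_betw Suc {..<k} {1..k}"
    by (simp add: bij_betw_def image_Suc_lessThan)
  ultimately have "bij_betw (Suc \<circ> (p \<circ> (\<lambda>s. s - 1))) {1..k} {1..k}"
    by (intro bij_betw_trans)
  then show ?thesis by (simp add: comp_def)
qed

lemma card_enumerations_word_le:
  assumes "p permutes {..<k}" and "finite S"
  shows "card {\<pi> \<in> enumerations k S. word_along k x \<pi> = w}
       \<le> card {\<pi> \<in> enumerations k S. word_along k x \<pi> = permute_list p w}"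
proof -
  define \<sigma> where "\<sigma> s = Suc (p (s - 1))" for s
  have \<sigma>: "bij_betw \<sigma> {1..k} {1..k}"
    unfolding \<sigma>_def using assms(1) by (rule bij_betw_shifted_permutation)
  define \<Phi> where "\<Phi> \<pi> = restrict (\<pi> \<circ> \<sigma>) {1..k}" for \<pi> :: "nat \<Rightarrow> 'a"
  have \<Phi>_enumerations: "\<Phi> \<pi> \<in> enumerations k S" if "\<pi> \<in> enumerations k S" for \<pi>
  proof -
    have \<pi>: "bij_betw \<pi> {1..k} S" using that by (simp add: enumerations_def)
    then have "bij_betw (\<Phi> \<pi>) {1..k} S"
      using bij_betw_trans[OF \<sigma> \<pi>] bij_betw_cong[of "{1..k}" "\<Phi> \<pi>" "\<pi> \<circ> \<sigma>"]
      by (simp add: \<Phi>_def)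
    moreover have "\<Phi> \<pi> \<in> {1..k} \<rightarrow>\<^sub>E S"
      using bij_betwE[OF \<sigma>] bij_betwE[OF \<pi>] by (auto simp: \<Phi>_def)
    ultimately show ?thesis by (simp add: enumerations_def)
  qed
  have word_\<Phi>: "word_along k x (\<Phi> \<pi>) = permute_list p (word_along k x \<pi>)" for \<pi>
  proof (rule nth_equalityI)
    fix i assume "i < length (word_along k x (\<Phi> \<pi>))"
    then have "i < k" by simp
    moreover have "p i < k" using permutes_in_image[OF assms(1)] \<open>i < k\<close> by simp
    ultimately show "word_along k x (\<Phi> \<pi>) ! i = permute_list p (word_along k x \<pi>) ! i"
      using assms(1) by (simp add: nth_word_along permute_list_nth \<Phi>_def \<sigma>_def)
  qed simp
  have inj: "inj_on \<Phi> (enumerations k S)"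
  proof (rule inj_onI)
    fix \<pi>\<^sub>1 \<pi>\<^sub>2
    assume \<pi>\<^sub>1: "\<pi>\<^sub>1 \<in> enumerations k S" and \<pi>\<^sub>2: "\<pi>\<^sub>2 \<in> enumerations k S"
      and \<Phi>_eq: "\<Phi> \<pi>\<^sub>1 = \<Phi> \<pi>\<^sub>2"
    have agree: "\<pi>\<^sub>1 (\<sigma> s) = \<pi>\<^sub>2 (\<sigma> s)" if "s \<in> {1..k}" for s
      using that fun_cong[OF \<Phi>_eq, of s] by (simp add: \<Phi>_def)
    have "\<pi>\<^sub>1 t = \<pi>\<^sub>2 t" if "t \<in> {1..k}" for t
    proof -
      have "t \<in> \<sigma> ` {1..k}"
        using that bij_betw_imp_surj_on[OF \<sigma>] by simp
      then obtain s where "s \<in> {1..k}" and "t = \<sigma> s" by (rule imageE)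
      then show ?thesis using agree by simp
    qed
    then show "\<pi>\<^sub>1 = \<pi>\<^sub>2"
      using \<pi>\<^sub>1 \<pi>\<^sub>2 by (intro PiE_ext[of _ "{1..k}" "\<lambda>_. S"]) (auto simp: enumerations_def)
  qed
  show ?thesis
  proof (rule card_inj_on_le[of \<Phi>])
    show "inj_on \<Phi> {\<pi> \<in> enumerations k S. word_along k x \<pi> = w}"
      by (rule inj_on_subset[OF inj]) blast
    show "\<Phi> ` {\<pi> \<in> enumerations k S. word_along k x \<pi> = w}
        \<subseteq> {\<pi> \<in> enumerations k S. word_along k x \<pi> = permute_list p w}"
      using \<Phi>_enumerations word_\<Phi> by auto
    show "finite {\<pi> \<in> enumerations k S. word_along k x \<pi> = permute_list p w}"
      using finite_enumerations[OF assms(2)] by simp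
  qed
qed

lemma pmf_word_along_le:
  assumes "finite S" and "card S = k"
  shows "pmf (map_pmf (word_along k x) (bij_pmf k S)) w
       \<le> 1 / card (permutations_of_multiset (mset w))"
proof (cases "length w = k")
  case False
  then have "w \<notin> set_pmf (map_pmf (word_along k x) (bij_pmf k S))"
    by (auto simp only: set_map_pmf length_word_along)
  then show ?thesis by (simp add: set_pmf_eq)
next
  case True
  let ?W = "map_pmf (word_along k x) (bij_pmf k S)"
  have pmf_W: "pmf ?W w' = card {\<pi> \<in> enumerations k S. word_along k x \<pi> = w'} / card (enumerations k S)"
    for w'
    unfolding bij_pmf_eq_enumerations pmf_map
    using measure_pmf_of_set[OF enumerations_nonempty[OF assms] finite_enumerations[OF assms(1)]]
    by (simp add: vimage_def Int_def)
  show ?thesis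
  proof (rule pmf_le_inverse_card)
    fix w' assume "w' \<in> permutations_of_multiset (mset w)"
    then obtain p where "p permutes {..<k}" and "permute_list p w = w'"
      using mset_eq_permutation[of w' w] True by (auto dest: permutations_of_multisetD)
    then have "card {\<pi> \<in> enumerations k S. word_along k x \<pi> = w}
        \<le> card {\<pi> \<in> enumerations k S. word_along k x \<pi> = w'}"
      using card_enumerations_word_le[OF \<open>p permutes {..<k}\<close> assms(1), where x = x and w = w]
        \<open>permute_list p w = w'\<close> by simp
    then show "pmf ?W w \<le> pmf ?W w'"
      unfolding pmf_W by (intro divide_right_mono) simp_all
  qed (simp_all add: permutations_of_multisetI)
qed

lemma pmf_cube_pmf_le: "pmf (cube_pmf d) x \<le> 1 / 2 ^ d"
  by (simp add: cube_pmf_def card_PiE PiE_eq_empty_iff finite_PiE indicator_def)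

lemma set_pmf_sample_pmf:
  "set_pmf (sample_pmf d k S) \<subseteq> ({1..d} \<rightarrow>\<^sub>E UNIV) \<times> prefix_parities ` {w. length w = k}"
  by (auto simp: sample_pmf_def cube_pmf_def PiE_eq_empty_iff finite_PiE prefix_xor_eq_prefix_parities)

lemma pmf_sample_pmf:
  "pmf (sample_pmf d k S) (x, z) = pmf (cube_pmf d) x * pmf (map_pmf (prefix_xor k x) (bij_pmf k S)) z"
proof -
  let ?q = "pmf (map_pmf (prefix_xor k x) (bij_pmf k S)) z"
  have "pmf (map_pmf (\<lambda>\<pi>. (x', prefix_xor k x' \<pi>)) (bij_pmf k S)) (x, z) = (if x' = x then ?q else 0)"
    for x'
  proof (cases "x' = x")
    case True
    have "map_pmf (\<lambda>\<pi>. (x, prefix_xor k x \<pi>)) (bij_pmf k S)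
        = map_pmf (Pair x) (map_pmf (prefix_xor k x) (bij_pmf k S))"
      by (simp add: map_pmf_comp)
    moreover have "inj (Pair x)" by (rule injI) simp
    ultimately show ?thesis using True pmf_map_inj' by metis
  next
    case False
    then show ?thesis by (auto simp: pmf_eq_0_set_pmf)
  qed
  then have "pmf (sample_pmf d k S) (x, z) = (\<integral>x'. (if x' = x then ?q else 0) \<partial>cube_pmf d)"
    unfolding sample_pmf_def map_pmf_def[symmetric] pmf_bind by simp
  also have "\<dots> = (\<Sum>x'\<in>{x}. (if x' = x then ?q else 0) * pmf (cube_pmf d) x')"
    by (rule integral_measure_pmf_real) (auto split: if_splits)
  finally show ?thesis by simp
qed

definition sample_dominator :: "nat \<Rightarrow> nat \<Rightarrow> sample \<Rightarrow> real" where
  "sample_dominator d k s =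
     (\<Sum>w | length w = k \<and> prefix_parities w = snd s. 1 / card (permutations_of_multiset (mset w))) / 2 ^ d"

lemma pmf_sample_pmf_le_dominator:
  assumes "finite S" and "card S = k"
  shows "pmf (sample_pmf d k S) s \<le> sample_dominator d k s"
proof -
  obtain x z where s: "s = (x, z)" by force
  let ?W = "map_pmf (word_along k x) (bij_pmf k S)"
  let ?Z = "{w. length w = k \<and> prefix_parities w = z}"
  have "finite ?Z" using finite_lists_length_eq_UNIV[of k] by (rule finite_subset[rotated]) auto
  have "set_pmf ?W \<subseteq> {w. length w = k}" by auto
  then have "prefix_parities -` {z} \<inter> set_pmf ?W = ?Z \<inter> set_pmf ?W" by auto
  have "map_pmf (prefix_xor k x) (bij_pmf k S) = map_pmf prefix_parities ?W"
    unfolding map_pmf_comp by (intro map_pmf_cong) (simp_all add: prefix_xor_eq_prefix_parities)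
  then have "pmf (map_pmf (prefix_xor k x) (bij_pmf k S)) z
      = measure_pmf.prob ?W (prefix_parities -` {z})"
    by (simp add: pmf_map)
  also have "\<dots> = measure_pmf.prob ?W ?Z"
    using \<open>prefix_parities -` {z} \<inter> set_pmf ?W = ?Z \<inter> set_pmf ?W\<close>
    by (metis measure_Int_set_pmf)
  also have "\<dots> = (\<Sum>w\<in>?Z. pmf ?W w)"
    using \<open>finite ?Z\<close> by (rule measure_measure_pmf_finite)
  also have "\<dots> \<le> (\<Sum>w\<in>?Z. 1 / card (permutations_of_multiset (mset w)))"
    by (intro sum_mono pmf_word_along_le[OF assms])
  finally have "pmf (cube_pmf d) x * pmf (map_pmf (prefix_xor k x) (bij_pmf k S)) z
      \<le> 1 / 2 ^ d * (\<Sum>w\<in>?Z. 1 / card (permutations_of_multiset (mset w)))"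
    using pmf_cube_pmf_le[of d x] by (intro mult_mono) auto
  then show ?thesis by (simp add: s pmf_sample_pmf sample_dominator_def)
qed

lemma sum_sample_dominator:
  "(\<Sum>s \<in> ({1..d} \<rightarrow>\<^sub>E UNIV) \<times> prefix_parities ` {w. length w = k}. sample_dominator d k s)
     \<le> real k + 1"
proof -
  let ?L = "{w :: bool list. length w = k}"
  let ?c = "\<lambda>w. 1 / real (card (permutations_of_multiset (mset w)))"
  have "finite ?L" by (rule finite_lists_length_eq_UNIV)
  have "(\<Sum>s \<in> ({1..d} \<rightarrow>\<^sub>E UNIV) \<times> prefix_parities ` ?L. sample_dominator d k s)
      = (\<Sum>x \<in> {1..d} \<rightarrow>\<^sub>E (UNIV :: bool set).
           (\<Sum>z \<in> prefix_parities ` ?L. \<Sum>w \<in> {w \<in> ?L. prefix_parities w = z}. ?c w) / 2 ^ d)"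
    unfolding sum.cartesian_product' by (simp add: sample_dominator_def sum_divide_distrib)
  also have "\<dots> = (\<Sum>x \<in> {1..d} \<rightarrow>\<^sub>E (UNIV :: bool set). (\<Sum>w\<in>?L. ?c w) / 2 ^ d)"
    by (simp only: sum.image_gen[OF \<open>finite ?L\<close>, symmetric])
  also have "\<dots> = (\<Sum>w\<in>?L. ?c w)"
    by (simp add: card_PiE)
  also have "\<dots> = (\<Sum>w\<in>?L. 1 / real (card {w' \<in> ?L. mset w' = mset w}))"
    by (intro sum.cong refl arg_cong[where f = "\<lambda>n. 1 / real (card n)"])
       (auto simp: permutations_of_multiset_def dest: mset_eq_length)
  also have "\<dots> = card (mset ` ?L)"
    using \<open>finite ?L\<close> by (rule sum_inverse_card_fibres)
  also have "\<dots> \<le> real k + 1"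
    using card_mset_bool_lists_le[of k] by linarith
  finally show ?thesis .
qed

lemma prob_success_pmf_le:
  assumes "k \<le> d"
  shows "measure_pmf.prob (success_pmf d k m est) {True} \<le> (real k + 1) ^ m / real (d choose k)"
proof -
  let ?H = "{S. S \<subseteq> {1..d} \<and> card S = k}"
  have "measure_pmf.prob (success_pmf d k m est) {True} \<le> (real k + 1) ^ m / real (card ?H)"
    unfolding success_pmf_def subset_pmf_def
  proof (rule success_prob_le_dominating_mass)
    show "?H \<noteq> {}"
      using assms by (auto intro!: exI[of _ "{1..k}"])
    show "finite (({1..d} \<rightarrow>\<^sub>E (UNIV :: bool set)) \<times> prefix_parities ` {w. length w = k})"
      by (intro finite_cartesian_product finite_PiE finite_imageI finite_lists_length_eq_UNIV) simp_all
    show "pmf (sample_pmf d k S) s \<le> sample_dominator d k s" if "S \<in> ?H" for S s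
      using that finite_subset[of S "{1..d}"] by (intro pmf_sample_pmf_le_dominator) auto
    show "set_pmf (sample_pmf d k S)
        \<subseteq> ({1..d} \<rightarrow>\<^sub>E UNIV) \<times> prefix_parities ` {w. length w = k}" for S
      by (rule set_pmf_sample_pmf)
    show "(\<Sum>s \<in> ({1..d} \<rightarrow>\<^sub>E UNIV) \<times> prefix_parities ` {w. length w = k}.
        sample_dominator d k s) \<le> real k + 1"
      by (rule sum_sample_dominator)
  qed simp
  then show ?thesis by (simp add: n_subsets)
qed

lemma exponent_ge_of_le_pow_div:
  fixes N K p :: real
  assumes "1 \<le> N" and "1 < K" and "0 \<le> p" and "p \<le> 1" and "p \<le> K ^ m / N"
  shows "(p * ln N - 1) / ln K \<le> real m"
proof -
  define t where "t = real m * ln K"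
  define L where "L = ln N"
  have "ln K > 0" using assms(2) by simp
  have "t \<ge> 0" "L \<ge> 0" using \<open>ln K > 0\<close> assms(1) by (simp_all add: t_def L_def)
  have "p * L - 1 \<le> t"
  proof (cases "L \<le> t")
    case True
    have "p * L \<le> L" using assms(3,4) \<open>L \<ge> 0\<close> by (simp add: mult_left_le_one_le)
    then show ?thesis using True by simp
  next
    case False
    \<comment> \<open>\<open>p \<le> e\<^sup>-\<^sup>u\<close> with \<open>u = L - t\<close>, so \<open>p L \<le> t + u e\<^sup>-\<^sup>u \<le> t + 1\<close>\<close>
    define u where "u = L - t"
    have "u > 0" using False by (simp add: u_def)
    have "exp t = K ^ m" "exp L = N"
      using assms(1,2) by (simp_all add: t_def L_def ln_realpow[symmetric])
    then have "p \<le> exp (- u)"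
      using assms(5) by (simp add: u_def exp_diff)
    have "u \<le> exp u" using exp_ge_add_one_self[of u] by linarith
    then have "u * exp (- u) \<le> 1" by (simp add: exp_minus field_simps)
    have "p * L = p * t + p * u" by (simp add: u_def algebra_simps)
    also have "\<dots> \<le> t + exp (- u) * u"
      using \<open>p \<le> exp (- u)\<close> assms(3,4) \<open>t \<ge> 0\<close> \<open>u > 0\<close>
      by (intro add_mono mult_left_le_one_le mult_right_mono) auto
    finally show ?thesis using \<open>u * exp (- u) \<le> 1\<close> by (simp add: mult.commute)
  qed
  then show ?thesis using \<open>ln K > 0\<close> by (simp add: divide_le_eq t_def L_def)
qed

lemma ln_binomial_ge:
  assumes "0 < k" and "k \<le> n"
  shows "real k * ln (real n / real k) \<le> ln (real (n choose k))"
proof -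
  have "0 < real n / real k" using assms by simp
  then have "ln ((real n / real k) ^ k) \<le> ln (real (n choose k))"
    using binomial_ge_n_over_k_pow_k[OF assms(2)] assms(2) by (subst ln_le_cancel_iff) auto
  with \<open>0 < real n / real k\<close> show ?thesis by (simp add: ln_realpow)
qed

theorem theorem11p2:
  fixes d k m :: nat and \<delta> :: real and est :: "sample list \<Rightarrow> nat set pmf"
  assumes "1 \<le> k" and "k \<le> d - 1"
    and "0 \<le> \<delta>" and "\<delta> \<le> 1"
    and "measure_pmf.prob (success_pmf d k m est) {True} \<ge> 1 - \<delta>"
  shows "real m \<ge> ((1 - \<delta>) * ln (real (d choose k)) - 1) / ln (real k + 1)
       \<and> (2 * k \<le> d \<longrightarrow>
         real m \<ge> ((1 - \<delta>) * real k * ln (real d / real k) - 1) / ln (real k + 1))"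
proof -
  have "k \<le> d" using assms(1,2) by linarith
  have "1 - \<delta> \<le> (real k + 1) ^ m / real (d choose k)"
    using assms(5) prob_success_pmf_le[OF \<open>k \<le> d\<close>, of m est] by linarith
  moreover have "1 \<le> real (d choose k)"
    using \<open>k \<le> d\<close> by (simp add: Suc_le_eq)
  ultimately have log_binomial: "((1 - \<delta>) * ln (real (d choose k)) - 1) / ln (real k + 1) \<le> real m"
    using assms(1,3,4) by (intro exponent_ge_of_le_pow_div) auto
  \<comment> \<open>\<open>k ln (d/k) \<le> ln (d choose k)\<close> holds for every \<open>k \<le> d\<close>.\<close>
  have "(1 - \<delta>) * real k * ln (real d / real k) \<le> (1 - \<delta>) * ln (real (d choose k))"
    using ln_binomial_ge[OF _ \<open>k \<le> d\<close>] assms(1,4) by (simp add: mult.assoc mult_left_mono)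
  then have "((1 - \<delta>) * real k * ln (real d / real k) - 1) / ln (real k + 1)
      \<le> ((1 - \<delta>) * ln (real (d choose k)) - 1) / ln (real k + 1)"
    using assms(1) by (intro divide_right_mono) auto
  with log_binomial show ?thesis by linarith
qed

end
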